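(* Let $\mathcal M=(W,W_\bot,\preccurlyeq,\sqsubseteq,V)$ be a bi-intuitionistic model, $\Sigma$ a set of formulas, and $\sim$ a $\Sigma$-bisimulation on $\mathcal M$ which is also an equivalence relation. Then: (1) if $\sqsubseteq$ is forward confluent in $\mathcal M$, then $\sqsubseteq/{\sim}$ is forward confluent in $\mathcal M/{\sim}$; (2) if $\sqsubseteq$ is backward confluent in $\mathcal M$, then $\sqsubseteq/{\sim}$ is backward confluent in $\mathcal M/{\sim}$; (3) if $\mathcal M$ is locally linear, so is $\mathcal M/{\sim}$.
   Context: Formulas: $p\mid\bot\mid\varphi\wedge\psi\mid\varphi\vee\psi\mid\varphi\to\psi\mid\Diamond\varphi\mid\Box\varphi$ over a countably infinite set $\mathbb P$. A bi-intuitionistic model $(W,W_\bot,\preccurlyeq,\sqsubseteq,V)$: $\preccurlyeq,\sqsubseteq$ preorders on $W$, $W_\bot$ upward closed under both, $V:\mathbb P\to2^W$ with $V(p)$ $\preccurlyeq$-upward closed and $\supseteq W_\bot$. Satisfaction: $p$ iff $w\in V(p)$; $\bot$ iff $w\in W_\bot$; $\wedge,\vee$ pointwise; $w\models\varphi\to\psi$ iff for all $v\succcurlyeq w$, $v\models\varphi$ implies $v\models\psi$; $w\models\Diamond\varphi$ iff for all $u\succcurlyeq w$ there is $v\sqsupseteq u$ with $v\models\varphi$; $w\models\Box\varphi$ iff $v\models\varphi$ whenever $w\preccurlyeq u\sqsubseteq v$. For $R\subseteq W\times W$ (relative to $\preccurlyeq$): forward confluent if $w\preccurlyeq w'$, $wRv$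 imply some $v'$ with $v\preccurlyeq v'$, $w'Rv'$; backward confluent if $wRv\preccurlyeq v'$ implies some $w'$ with $w\preccurlyeq w'Rv'$. Locally linear: $w\preccurlyeq u$, $w\preccurlyeq v$ imply $u\preccurlyeq v$ or $v\preccurlyeq u$. The $\Sigma$-label of $w$ is $\ell(w)=(\ell^+(w);\ell^\Diamond(w))$ with $\ell^+(w)=\{\varphi\in\Sigma:(\mathcal M,w)\models\varphi\}$ and $\ell^\Diamond(w)=\{\varphi\in\Sigma:\forall v\sqsupseteq w,\ (\mathcal M,v)\not\models\varphi\}$. A $\Sigma$-bisimulation is a relation $Z\subseteq W\times W$ that is forward and backward confluent (relative to $\preccurlyeq$) and such that $wZv$ implies $\ell(w)=\ell(v)$. For an equivalence relation $\sim$ on $W$ with classes $[w]$, the quotient $\mathcal M/{\sim}=(W/{\sim},W_\bot/{\sim},\preccurlyeq/{\sim},\sqsubseteq/{\sim},V/{\sim})$ has $W/{\sim}=\{[w]:w\in W\}$, $W_\bot/{\sim}=\{[w]:w\in W_\bot\}$, $[w]\,(\preccurlyeq/{\sim})\,[v]$ iff there are $w'\sim w$, $v'\sim v$ with $w'\preccurlyeq v'$; $\sqsubseteq/{\sim}$ is the transitive closure of the relation $\sqsubseteq^0/{\sim}$ given by $[w]\,(\sqsubseteq^0/{\sim})\,[v]$ iff there are $w',v'$ with $w\sim w'\sqsubseteq v'\sim v$; and $[w]\in (V/{\sim})(p)$ iff some $w'\sim w$ lies in $V(p)$. *)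

theory Defs
  imports Main
begin

datatype fm = Atom nat | Bot | Conj fm fm | Disj fm fm | Imp fm fm | Dia fm | Bx fm

definition bi_model :: "'w set \<Rightarrow> 'w set \<Rightarrow> 'w rel \<Rightarrow> 'w rel \<Rightarrow> (nat \<Rightarrow> 'w set) \<Rightarrow> bool" where
  "bi_model W Wb le sq V \<longleftrightarrow>
     le \<subseteq> W \<times> W \<and> refl_on W le \<and> trans le \<and>
     sq \<subseteq> W \<times> W \<and> refl_on W sq \<and> trans sq \<and>
     Wb \<subseteq> W \<and>
     (\<forall>w v. w \<in> Wb \<and> (w, v) \<in> le \<longrightarrow> v \<in> Wb) \<and>
     (\<forall>w v. w \<in> Wb \<and> (w, v) \<in> sq \<longrightarrow> v \<in> Wb) \<and>
     (\<forall>p. V p \<subseteq> W \<and> Wb \<subseteq> V p \<and> (\<forall>w v. w \<in> V p \<and> (w, v) \<in> le \<longrightarrow> v \<in> V p))"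

primrec sat :: "'w set \<Rightarrow> 'w set \<Rightarrow> 'w rel \<Rightarrow> 'w rel \<Rightarrow> (nat \<Rightarrow> 'w set) \<Rightarrow> 'w \<Rightarrow> fm \<Rightarrow> bool" where
  "sat W Wb le sq V w (Atom p) = (w \<in> V p)"
| "sat W Wb le sq V w Bot = (w \<in> Wb)"
| "sat W Wb le sq V w (Conj a b) = (sat W Wb le sq V w a \<and> sat W Wb le sq V w b)"
| "sat W Wb le sq V w (Disj a b) = (sat W Wb le sq V w a \<or> sat W Wb le sq V w b)"
| "sat W Wb le sq V w (Imp a b) =
     (\<forall>v. (w, v) \<in> le \<longrightarrow> sat W Wb le sq V v a \<longrightarrow> sat W Wb le sq V v b)"
| "sat W Wb le sq V w (Dia a) =
     (\<forall>u. (w, u) \<in> le \<longrightarrow> (\<exists>v. (u, v) \<in> sq \<and> sat W Wb le sq V v a))"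
| "sat W Wb le sq V w (Bx a) =
     (\<forall>u v. (w, u) \<in> le \<longrightarrow> (u, v) \<in> sq \<longrightarrow> sat W Wb le sq V v a)"

definition fwd_conf :: "'a rel \<Rightarrow> 'a rel \<Rightarrow> bool" where
  "fwd_conf le R \<longleftrightarrow> (\<forall>w w' v. (w, w') \<in> le \<and> (w, v) \<in> R \<longrightarrow> (\<exists>v'. (v, v') \<in> le \<and> (w', v') \<in> R))"

definition bwd_conf :: "'a rel \<Rightarrow> 'a rel \<Rightarrow> bool" where
  "bwd_conf le R \<longleftrightarrow> (\<forall>w v v'. (w, v) \<in> R \<and> (v, v') \<in> le \<longrightarrow> (\<exists>w'. (w, w') \<in> le \<and> (w', v') \<in> R))"

definition loc_linear :: "'a rel \<Rightarrow> bool" where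
  "loc_linear le \<longleftrightarrow> (\<forall>w u v. (w, u) \<in> le \<and> (w, v) \<in> le \<longrightarrow> (u, v) \<in> le \<or> (v, u) \<in> le)"

definition label_pos :: "'w set \<Rightarrow> 'w set \<Rightarrow> 'w rel \<Rightarrow> 'w rel \<Rightarrow> (nat \<Rightarrow> 'w set) \<Rightarrow> fm set \<Rightarrow> 'w \<Rightarrow> fm set" where
  "label_pos W Wb le sq V \<Sigma> w = {\<phi> \<in> \<Sigma>. sat W Wb le sq V w \<phi>}"

definition label_dia :: "'w set \<Rightarrow> 'w set \<Rightarrow> 'w rel \<Rightarrow> 'w rel \<Rightarrow> (nat \<Rightarrow> 'w set) \<Rightarrow> fm set \<Rightarrow> 'w \<Rightarrow> fm set" where
  "label_dia W Wb le sq V \<Sigma> w = {\<phi> \<in> \<Sigma>. \<forall>v. (w, v) \<in> sq \<longrightarrow> \<not> sat W Wb le sq V v \<phi>}"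

definition label :: "'w set \<Rightarrow> 'w set \<Rightarrow> 'w rel \<Rightarrow> 'w rel \<Rightarrow> (nat \<Rightarrow> 'w set) \<Rightarrow> fm set \<Rightarrow> 'w \<Rightarrow> fm set \<times> fm set" where
  "label W Wb le sq V \<Sigma> w = (label_pos W Wb le sq V \<Sigma> w, label_dia W Wb le sq V \<Sigma> w)"

definition sigma_bisim :: "'w set \<Rightarrow> 'w set \<Rightarrow> 'w rel \<Rightarrow> 'w rel \<Rightarrow> (nat \<Rightarrow> 'w set) \<Rightarrow> fm set \<Rightarrow> 'w rel \<Rightarrow> bool" where
  "sigma_bisim W Wb le sq V \<Sigma> Z \<longleftrightarrow> Z \<subseteq> W \<times> W \<and> fwd_conf le Z \<and> bwd_conf le Z \<and>
     (\<forall>w v. (w, v) \<in> Z \<longrightarrow> label W Wb le sq V \<Sigma> w = label W Wb le sq V \<Sigma> v)"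

definition qW :: "'w set \<Rightarrow> 'w rel \<Rightarrow> 'w set set" where
  "qW W sim = {sim `` {w} | w. w \<in> W}"

definition qWb :: "'w set \<Rightarrow> 'w rel \<Rightarrow> 'w set set" where
  "qWb Wb sim = {sim `` {w} | w. w \<in> Wb}"

definition qle :: "'w set \<Rightarrow> 'w rel \<Rightarrow> 'w rel \<Rightarrow> 'w set rel" where
  "qle W sim le = {(sim `` {w}, sim `` {v}) | w v. w \<in> W \<and> v \<in> W \<and>
      (\<exists>w' v'. (w, w') \<in> sim \<and> (v, v') \<in> sim \<and> (w', v') \<in> le)}"

definition qsq0 :: "'w set \<Rightarrow> 'w rel \<Rightarrow> 'w rel \<Rightarrow> 'w set rel" where
  "qsq0 W sim sq = {(sim `` {w}, sim `` {v}) | w v. w \<in> W \<and> v \<in> W \<and>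
      (\<exists>w' v'. (w, w') \<in> sim \<and> (w', v') \<in> sq \<and> (v', v) \<in> sim)}"

definition qsq :: "'w set \<Rightarrow> 'w rel \<Rightarrow> 'w rel \<Rightarrow> 'w set rel" where
  "qsq W sim sq = (qsq0 W sim sq)\<^sup>+"

definition qV :: "'w set \<Rightarrow> 'w rel \<Rightarrow> (nat \<Rightarrow> 'w set) \<Rightarrow> nat \<Rightarrow> 'w set set" where
  "qV W sim V p = {sim `` {w} | w. w \<in> W \<and> (\<exists>w'. (w, w') \<in> sim \<and> w' \<in> V p)}"

end

theory Submission
  imports Defs
begin

text \<open>Only forward confluence of the bisimulation is needed: it lets every
  \<open>\<preccurlyeq>/\<sim>\<close>-step out of a class be realised by a \<open>\<preccurlyeq>\<close>-step out of any chosen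
  representative. Hence the one-step quotient relation \<open>\<sqsubseteq>\<^sup>0/\<sim>\<close> inherits forward
  and backward confluence from \<open>\<sqsubseteq>\<close>, and both properties are preserved by
  transitive closure. Local linearity transfers the same way, since two
  successors of a class can be realised from a common representative.\<close>

lemma fwd_conf_trancl:
  assumes "fwd_conf le R"
  shows "fwd_conf le (R\<^sup>+)"
proof -
  have "\<exists>v'. (v, v') \<in> le \<and> (w', v') \<in> R\<^sup>+"
    if "(w, v) \<in> R\<^sup>+" "(w, w') \<in> le" for w w' v
    using that(1)
  proof (induction rule: trancl_induct)
    case (base v)
    then show ?case using assms that(2) unfolding fwd_conf_def by blast
  next
    case (step y z)
    then obtain y' where "(y, y') \<in> le" "(w', y') \<in> R\<^sup>+" by blast
    moreover obtain z' where "(z, z') \<in> le" "(y', z') \<in> R"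
      using assms calculation(1) step.hyps(2) unfolding fwd_conf_def by blast
    ultimately show ?case by (meson trancl_into_trancl)
  qed
  then show ?thesis unfolding fwd_conf_def by blast
qed

lemma bwd_conf_trancl:
  assumes "bwd_conf le R"
  shows "bwd_conf le (R\<^sup>+)"
proof -
  have "\<forall>v'. (v, v') \<in> le \<longrightarrow> (\<exists>w'. (w, w') \<in> le \<and> (w', v') \<in> R\<^sup>+)"
    if "(w, v) \<in> R\<^sup>+" for w v
    using that
  proof (induction rule: trancl_induct)
    case (base v)
    then show ?case using assms unfolding bwd_conf_def by blast
  next
    case (step y z)
    show ?case
    proof (intro allI impI)
      fix z' assume "(z, z') \<in> le"
      then obtain y' where y': "(y, y') \<in> le" "(y', z') \<in> R"
        using assms step.hyps(2) unfolding bwd_conf_def by blast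
      then obtain w' where "(w, w') \<in> le" "(w', y') \<in> R\<^sup>+"
        using step.IH by blast
      with y'(2) show "\<exists>w'. (w, w') \<in> le \<and> (w', z') \<in> R\<^sup>+"
        by (meson trancl_into_trancl)
    qed
  qed
  then show ?thesis unfolding bwd_conf_def by blast
qed

lemma qle_classI:
  assumes "equiv W sim" "a \<in> W" "b \<in> W" "(a, b) \<in> le"
  shows "(sim `` {a}, sim `` {b}) \<in> qle W sim le"
proof -
  have "(a, a) \<in> sim" "(b, b) \<in> sim"
    using assms(1-3) unfolding equiv_def refl_on_def by auto
  with assms show ?thesis unfolding qle_def by blast
qed

lemma qsq0_classI:
  assumes "equiv W sim" "a \<in> W" "b \<in> W" "(a, b) \<in> sq"
  shows "(sim `` {a}, sim `` {b}) \<in> qsq0 W sim sq"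
proof -
  have "(a, a) \<in> sim" "(b, b) \<in> sim"
    using assms(1-3) unfolding equiv_def refl_on_def by auto
  with assms show ?thesis unfolding qsq0_def by blast
qed

lemma qsq0_classE:
  assumes "equiv W sim" "(X, Y) \<in> qsq0 W sim sq"
  obtains a b where "a \<in> W" "b \<in> W" "(a, b) \<in> sq" "X = sim `` {a}" "Y = sim `` {b}"
proof -
  obtain w v w' v' where h: "X = sim `` {w}" "Y = sim `` {v}"
    "(w, w') \<in> sim" "(w', v') \<in> sq" "(v', v) \<in> sim"
    using assms(2) unfolding qsq0_def by blast
  have "w' \<in> W" "v' \<in> W"
    using h(3,5) assms(1) unfolding equiv_def refl_on_def by auto
  moreover have "sim `` {w} = sim `` {w'}" "sim `` {v} = sim `` {v'}"
    using equiv_class_eq[OF assms(1)] h(3,5) assms(1)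
    unfolding equiv_def sym_def by blast+
  ultimately show thesis using that h by auto
qed

lemma qle_dom:
  assumes "(X, Y) \<in> qle W sim le"
  obtains a where "a \<in> W" "X = sim `` {a}"
  using assms unfolding qle_def by blast

lemma qle_from_representative:
  assumes eq: "equiv W sim" and fc: "fwd_conf le sim" and le_W: "le \<subseteq> W \<times> W"
    and "(sim `` {a}, Y) \<in> qle W sim le"
  obtains b where "(a, b) \<in> le" "b \<in> W" "Y = sim `` {b}"
proof -
  obtain w v w' v' where h: "sim `` {a} = sim `` {w}" "Y = sim `` {v}" "w \<in> W"
    "(w, w') \<in> sim" "(v, v') \<in> sim" "(w', v') \<in> le"
    using assms(4) unfolding qle_def by blast
  have "w \<in> sim `` {a}"
    using h(1,3) eq unfolding equiv_def refl_on_def by auto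
  then have "(w', a) \<in> sim"
    using h(4) eq unfolding equiv_def sym_def trans_def by blast
  then obtain b where b: "(a, b) \<in> le" "(v', b) \<in> sim"
    using fc h(6) unfolding fwd_conf_def by blast
  have "(v, b) \<in> sim" using h(5) b(2) eq unfolding equiv_def trans_def by blast
  then have "Y = sim `` {b}" using h(2) equiv_class_eq[OF eq] by blast
  with b(1) le_W show thesis using that by blast
qed

lemma fwd_conf_qsq0:
  assumes eq: "equiv W sim" and fc: "fwd_conf le sim" and le_W: "le \<subseteq> W \<times> W"
    and fs: "fwd_conf le sq"
  shows "fwd_conf (qle W sim le) (qsq0 W sim sq)"
  unfolding fwd_conf_def
proof (intro allI impI, elim conjE)
  fix X X' Y assume XX': "(X, X') \<in> qle W sim le" and XY: "(X, Y) \<in> qsq0 W sim sq"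
  obtain a b where ab: "a \<in> W" "b \<in> W" "(a, b) \<in> sq" "X = sim `` {a}" "Y = sim `` {b}"
    using qsq0_classE[OF eq XY] .
  obtain a' where a': "(a, a') \<in> le" "a' \<in> W" "X' = sim `` {a'}"
    using qle_from_representative[OF eq fc le_W] XX' ab(4) by metis
  obtain b' where b': "(b, b') \<in> le" "(a', b') \<in> sq"
    using fs a'(1) ab(3) unfolding fwd_conf_def by blast
  have "b' \<in> W" using b'(1) le_W by blast
  then show "\<exists>Y'. (Y, Y') \<in> qle W sim le \<and> (X', Y') \<in> qsq0 W sim sq"
    using qle_classI[OF eq ab(2) _ b'(1)] qsq0_classI[OF eq a'(2) _ b'(2)] ab(5) a'(3)
    by blast
qed

lemma bwd_conf_qsq0:
  assumes eq: "equiv W sim" and fc: "fwd_conf le sim" and le_W: "le \<subseteq> W \<times> W"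
    and bs: "bwd_conf le sq"
  shows "bwd_conf (qle W sim le) (qsq0 W sim sq)"
  unfolding bwd_conf_def
proof (intro allI impI, elim conjE)
  fix X Y Y' assume XY: "(X, Y) \<in> qsq0 W sim sq" and YY': "(Y, Y') \<in> qle W sim le"
  obtain a b where ab: "a \<in> W" "b \<in> W" "(a, b) \<in> sq" "X = sim `` {a}" "Y = sim `` {b}"
    using qsq0_classE[OF eq XY] .
  obtain b' where b': "(b, b') \<in> le" "b' \<in> W" "Y' = sim `` {b'}"
    using qle_from_representative[OF eq fc le_W] YY' ab(5) by metis
  obtain a' where a': "(a, a') \<in> le" "(a', b') \<in> sq"
    using bs b'(1) ab(3) unfolding bwd_conf_def by blast
  have "a' \<in> W" using a'(1) le_W by blast
  then show "\<exists>X'. (X, X') \<in> qle W sim le \<and> (X', Y') \<in> qsq0 W sim sq"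
    using qle_classI[OF eq ab(1) _ a'(1)] qsq0_classI[OF eq _ b'(2) a'(2)] ab(4) b'(3)
    by blast
qed

lemma loc_linear_qle:
  assumes eq: "equiv W sim" and fc: "fwd_conf le sim" and le_W: "le \<subseteq> W \<times> W"
    and ll: "loc_linear le"
  shows "loc_linear (qle W sim le)"
  unfolding loc_linear_def
proof (intro allI impI, elim conjE)
  fix X U Z assume XU: "(X, U) \<in> qle W sim le" and XZ: "(X, Z) \<in> qle W sim le"
  obtain a where a: "X = sim `` {a}" using qle_dom[OF XU] by blast
  obtain u where u: "(a, u) \<in> le" "u \<in> W" "U = sim `` {u}"
    using qle_from_representative[OF eq fc le_W] XU a by metis
  obtain v where v: "(a, v) \<in> le" "v \<in> W" "Z = sim `` {v}"
    using qle_from_representative[OF eq fc le_W] XZ a by metis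
  have "(u, v) \<in> le \<or> (v, u) \<in> le" using ll u(1) v(1) unfolding loc_linear_def by blast
  then show "(U, Z) \<in> qle W sim le \<or> (Z, U) \<in> qle W sim le"
    using qle_classI[OF eq u(2) v(2)] qle_classI[OF eq v(2) u(2)] u(3) v(3) by blast
qed

theorem mainTheorem10:
  fixes W Wb :: "'w set" and le sq sim :: "'w rel" and V :: "nat \<Rightarrow> 'w set" and \<Sigma> :: "fm set"
  assumes "bi_model W Wb le sq V"
    and "sigma_bisim W Wb le sq V \<Sigma> sim"
    and "equiv W sim"
  shows "(fwd_conf le sq \<longrightarrow> fwd_conf (qle W sim le) (qsq W sim sq))
       \<and> (bwd_conf le sq \<longrightarrow> bwd_conf (qle W sim le) (qsq W sim sq))
       \<and> (loc_linear le \<longrightarrow> loc_linear (qle W sim le))"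
proof -
  have le_W: "le \<subseteq> W \<times> W" using assms(1) unfolding bi_model_def by blast
  have fc: "fwd_conf le sim" using assms(2) unfolding sigma_bisim_def by blast
  show ?thesis
    unfolding qsq_def
    using fwd_conf_trancl[OF fwd_conf_qsq0[OF assms(3) fc le_W]]
      bwd_conf_trancl[OF bwd_conf_qsq0[OF assms(3) fc le_W]]
      loc_linear_qle[OF assms(3) fc le_W]
    by blast
qed

end
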